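(* There is an absolute constant $C>0$ such that for every positive integer $n$ the following holds. Suppose that $\mathcal{A}\subset\mathcal{P}[n]$ does not contain two distinct sets $A$ and $B$ with $|B\setminus A|=2|A\setminus B|$ in which $a<b$ for every $a\in A\setminus B$ and every $b\in B\setminus A$. Then \[ |\mathcal{A}|\le C\,e^{120(\log n)^{1/2}}\frac{2^n}{n^{1/2}}. \]
   Context: $[n]=\{1,\ldots,n\}$ and $\mathcal{P}[n]$ is its power set; $\log$ is the natural logarithm. *)

theory Defs
  imports Complex_Main
begin

definition forbidden_pair :: "nat set \<Rightarrow> nat set \<Rightarrow> bool" where
  "forbidden_pair A B \<longleftrightarrow> A \<noteq> B \<and> card (B - A) = 2 * card (A - B) \<and>
     (\<forall>a\<in>A - B. \<forall>b\<in>B - A. a < b)"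

end

theory Submission
  imports Defs
begin

text \<open>Split [n] into a lower half L = {1..h} and an upper half H = {h+1..n} with h = n div 2, and
  fix symmetric chain decompositions of the power sets of L and H. Record a member A by the chain c
  containing A \<inter> L, the chain d containing A \<inter> H, and the number 2i + j, where i and j are the
  positions of A \<inter> L in c and of A \<inter> H in d. If two distinct members had the same record, one would
  exceed the other by i' - i elements of L and fall short of it by 2(i' - i) elements of H, and since
  every element of L is below every element of H they would form the forbidden configuration. Hence
  the family has at most the sum of 2|c| + |d| over all pairs of chains. A symmetric chain
  decomposition of an m-set has at most (m choose m div 2) \<le> 2^m / sqrt (m + 1) chains of total
  length 2^m, so the family has at most 3 * 2^n / sqrt (n div 2 + 1) members.\<close>

lemma central_binomial_Suc: "(2 * Suc k choose Suc k) = 2 * (Suc (2 * k) choose k)"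
proof -
  have "(Suc (2 * k) choose Suc k) = (Suc (2 * k) choose k)"
    using central_binomial_odd[of "Suc (2 * k)"] by simp
  then show ?thesis
    using binomial_Suc_Suc[of "Suc (2 * k)" k] by simp
qed

lemma Suc_times_binomial_odd: "Suc k * (Suc (2 * k) choose k) = Suc (2 * k) * (2 * k choose k)"
proof -
  have "(Suc (2 * k) choose Suc k) = (Suc (2 * k) choose k)"
    using central_binomial_odd[of "Suc (2 * k)"] by simp
  then show ?thesis
    using Suc_times_binomial_eq[of "2 * k" k] by (simp add: mult.commute)
qed

lemma central_binomial_even_sq_le: "(2 * k choose k)^2 * (2 * k + 1) \<le> 16 ^ k"
proof (induction k)
  case 0
  then show ?case by simp
next
  case (Suc k)
  let ?a = "2 * k choose k" and ?a' = "2 * Suc k choose Suc k"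
  have "?a'^2 * (2 * k + 3) * (Suc k)^2 = 4 * (Suc k * (Suc (2 * k) choose k))^2 * (2 * k + 3)"
    unfolding central_binomial_Suc by (simp add: power2_eq_square algebra_simps)
  also have "\<dots> = 4 * (Suc (2 * k) * ?a)^2 * (2 * k + 3)"
    unfolding Suc_times_binomial_odd ..
  also have "\<dots> = 4 * (2 * k + 1) * (2 * k + 3) * (?a^2 * (2 * k + 1))"
    by (simp add: power2_eq_square algebra_simps)
  also have "\<dots> \<le> 4 * (2 * k + 1) * (2 * k + 3) * 16 ^ k"
    using Suc.IH by (rule mult_le_mono2)
  also have "\<dots> \<le> 16 ^ Suc k * (Suc k)^2"
    by (simp add: power2_eq_square algebra_simps)
  finally have "?a'^2 * (2 * k + 3) \<le> 16 ^ Suc k"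
    using mult_le_cancel2 by (metis zero_less_Suc zero_less_power)
  moreover have "2 * Suc k + 1 = 2 * k + 3"
    by simp
  ultimately show ?case
    by (simp only:)
qed

lemma central_binomial_sq_le: "(m choose (m div 2))^2 * (m + 1) \<le> 4 ^ m"
proof (cases "even m")
  case True
  then obtain k where "m = 2 * k"
    by blast
  then show ?thesis
    using central_binomial_even_sq_le[of k] by (simp add: power_mult)
next
  case False
  then obtain k where m: "m = Suc (2 * k)"
    using oddE by fastforce
  let ?b = "Suc (2 * k) choose k"
  have "4 * (?b^2 * (2 * k + 2)) \<le> 4 * (?b^2 * (2 * k + 3))"
    by (intro mult_le_mono2) simp
  also have "\<dots> = (2 * Suc k choose Suc k)^2 * (2 * Suc k + 1)"
    unfolding central_binomial_Suc by (simp add: power2_eq_square algebra_simps)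
  also have "\<dots> \<le> 4 * 4 ^ m"
    using central_binomial_even_sq_le[of "Suc k"] by (simp add: m power_mult)
  finally show ?thesis
    using m by simp
qed

lemma central_binomial_le: "real (m choose (m div 2)) \<le> 2 ^ m / sqrt (real m + 1)"
proof -
  have "(real (m choose (m div 2)) * sqrt (real m + 1))^2 = real ((m choose (m div 2))^2 * (m + 1))"
    by (simp add: power_mult_distrib algebra_simps)
  also have "\<dots> \<le> 4 ^ m"
    using central_binomial_sq_le[of m] by (metis of_nat_le_iff of_nat_numeral of_nat_power)
  also have "\<dots> = (2 ^ m)^2"
    by (simp add: power2_eq_square flip: power_mult_distrib)
  finally have "real (m choose (m div 2)) * sqrt (real m + 1) \<le> 2 ^ m"
    by (rule power2_le_imp_le) simp
  then show ?thesis
    by (simp add: field_simps)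
qed

text \<open>A saturated chain of subsets of X whose ranks run from k to card X - k; the last conjunct
  expresses this symmetry about the middle rank.\<close>

definition symmetric_chain :: "'a set \<Rightarrow> 'a set list \<Rightarrow> bool" where
  "symmetric_chain X c \<longleftrightarrow> c \<noteq> [] \<and> (\<forall>i<length c. c ! i \<subseteq> X) \<and>
     (\<forall>i j. i \<le> j \<longrightarrow> j < length c \<longrightarrow> c ! i \<subseteq> c ! j) \<and>
     (\<forall>i<length c. card (c ! i) = card (c ! 0) + i) \<and>
     2 * card (c ! 0) + length c = card X + 1"


abbreviation chain_positions :: "'a list set \<Rightarrow> ('a list \<times> nat) set" where
  "chain_positions CS \<equiv> SIGMA c:CS. {..<length c}"

abbreviation chain_entry :: "'a list \<times> nat \<Rightarrow> 'a" where
  "chain_entry \<equiv> \<lambda>(c, i). c ! i"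

definition symmetric_chain_decomposition :: "'a set \<Rightarrow> 'a set list set \<Rightarrow> bool" where
  "symmetric_chain_decomposition X CS \<longleftrightarrow> finite CS \<and> (\<forall>c\<in>CS. symmetric_chain X c) \<and>
     bij_betw chain_entry (chain_positions CS) (Pow X)"

definition extend_chain :: "'a \<Rightarrow> 'a set list \<Rightarrow> 'a set list" where
  "extend_chain x c = c @ [insert x (last c)]"

definition shift_chain :: "'a \<Rightarrow> 'a set list \<Rightarrow> 'a set list" where
  "shift_chain x c = map (insert x) (butlast c)"

lemma symmetric_chain_extend_chain:
  assumes c: "symmetric_chain X c" and "finite X" and "x \<notin> X"
  shows "symmetric_chain (insert x X) (extend_chain x c)"
proof -
  have ne: "c \<noteq> []" and sub: "\<And>i. i < length c \<Longrightarrow> c ! i \<subseteq> X"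
    and mono: "\<And>i j. i \<le> j \<Longrightarrow> j < length c \<Longrightarrow> c ! i \<subseteq> c ! j"
    and card: "\<And>i. i < length c \<Longrightarrow> card (c ! i) = card (c ! 0) + i"
    and sym: "2 * card (c ! 0) + length c = card X + 1"
    using c unfolding symmetric_chain_def by blast+
  have last: "last c = c ! (length c - 1)"
    using ne by (simp add: last_conv_nth)
  have "last c \<subseteq> X"
    using sub[of "length c - 1"] ne last by simp
  then have card_last: "card (insert x (last c)) = card (c ! 0) + length c"
    using card[of "length c - 1"] ne last \<open>finite X\<close> \<open>x \<notin> X\<close> by (auto simp: finite_subset)
  have below_last: "c ! i \<subseteq> last c" if "i < length c" for i
    using mono[of i "length c - 1"] that last by simp
  let ?c = "c @ [insert x (last c)]"
  show ?thesis
    unfolding symmetric_chain_def extend_chain_def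
  proof (intro conjI allI impI)
    fix i j
    assume "i \<le> j" "j < length ?c"
    then consider "j < length c" | "i < length c" "j = length c" | "i = length c" "j = length c"
      by fastforce
    then show "?c ! i \<subseteq> ?c ! j"
    proof cases
      case 1
      then show ?thesis
        using \<open>i \<le> j\<close> mono by (simp add: nth_append)
    next
      case 2
      then show ?thesis
        using below_last[of i] by (auto simp: nth_append)
    qed simp
  next
    fix i
    assume "i < length ?c"
    then consider "i < length c" | "i = length c"
      by fastforce
    moreover have "?c ! 0 = c ! 0"
      using ne by (simp add: nth_append)
    ultimately show "?c ! i \<subseteq> insert x X" and "card (?c ! i) = card (?c ! 0) + i"
      by (cases; use sub card[of i] card_last \<open>last c \<subseteq> X\<close> in \<open>simp add: nth_append subset_insertI2\<close>)+
  qed (use ne sym \<open>finite X\<close> \<open>x \<notin> X\<close> in \<open>simp_all add: nth_append\<close>)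
qed

lemma symmetric_chain_shift_chain:
  assumes c: "symmetric_chain X c" and "finite X" and "x \<notin> X" and "2 \<le> length c"
  shows "symmetric_chain (insert x X) (shift_chain x c)"
proof -
  let ?c = "map (insert x) (butlast c)"
  have sub: "\<And>i. i < length c \<Longrightarrow> c ! i \<subseteq> X"
    and mono: "\<And>i j. i \<le> j \<Longrightarrow> j < length c \<Longrightarrow> c ! i \<subseteq> c ! j"
    and card: "\<And>i. i < length c \<Longrightarrow> card (c ! i) = card (c ! 0) + i"
    and sym: "2 * card (c ! 0) + length c = card X + 1"
    using c unfolding symmetric_chain_def by blast+
  have nth: "?c ! i = insert x (c ! i)" if "i < length ?c" for i
    using that by (simp add: nth_butlast)
  have card_nth: "card (?c ! i) = Suc (card (c ! i))" if "i < length ?c" for i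
  proof -
    have "c ! i \<subseteq> X"
      using sub that by simp
    then have "finite (c ! i)" and "x \<notin> c ! i"
      using \<open>finite X\<close> \<open>x \<notin> X\<close> finite_subset by blast+
    then show ?thesis
      unfolding nth[OF that] by simp
  qed
  have "0 < length ?c"
    using \<open>2 \<le> length c\<close> by simp
  show ?thesis
    unfolding symmetric_chain_def shift_chain_def
  proof (intro conjI allI impI)
    fix i j
    assume ij: "i \<le> j" "j < length ?c"
    then have "i < length ?c"
      by simp
    then show "?c ! i \<subseteq> ?c ! j"
      unfolding nth[OF \<open>i < length ?c\<close>] nth[OF ij(2)] using mono[of i j] ij by fastforce
  next
    fix i
    assume i: "i < length ?c"
    then have "i < length c"
      by simp
    then show "?c ! i \<subseteq> insert x X"
      using sub[of i] unfolding nth[OF i] by auto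
    show "card (?c ! i) = card (?c ! 0) + i"
      using card[OF \<open>i < length c\<close>] unfolding card_nth[OF i] card_nth[OF \<open>0 < length ?c\<close>] by simp
  next
    show "2 * card (?c ! 0) + length ?c = card (insert x X) + 1"
      unfolding card_nth[OF \<open>0 < length ?c\<close>] using sym \<open>2 \<le> length c\<close> \<open>finite X\<close> \<open>x \<notin> X\<close> by simp
  qed (use \<open>0 < length ?c\<close> length_greater_0_conv in blast)
qed

definition insert_chains :: "'a \<Rightarrow> 'a set list set \<Rightarrow> 'a set list set" where
  "insert_chains x CS = extend_chain x ` CS \<union> shift_chain x ` {c \<in> CS. 2 \<le> length c}"

text \<open>Where the set at position p of CS, with x added if b, lies in insert_chains x CS.\<close>

definition lift_position :: "'a \<Rightarrow> bool \<Rightarrow> 'a set list \<times> nat \<Rightarrow> 'a set list \<times> nat" where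
  "lift_position x b = (\<lambda>(c, i). if \<not> b then (extend_chain x c, i)
     else if i = length c - 1 then (extend_chain x c, length c) else (shift_chain x c, i))"

lemma lift_position:
  assumes "p \<in> chain_positions CS"
  shows "lift_position x b p \<in> chain_positions (insert_chains x CS)"
    and "chain_entry (lift_position x b p) = (if b then insert x (chain_entry p) else chain_entry p)"
proof -
  obtain c i where p: "p = (c, i)" and "c \<in> CS" and "i < length c"
    using assms by blast
  then have "last c = c ! (length c - 1)"
    by (metis last_conv_nth list.size(3) not_less_zero)
  then show "lift_position x b p \<in> chain_positions (insert_chains x CS)"
    and "chain_entry (lift_position x b p) = (if b then insert x (chain_entry p) else chain_entry p)"
    using \<open>c \<in> CS\<close> \<open>i < length c\<close>
    by (auto simp: p lift_position_def insert_chains_def extend_chain_def shift_chain_def nth_append nth_butlast)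
qed

lemma lift_position_preimage:
  assumes "q \<in> chain_positions (insert_chains x CS)" and "\<forall>c\<in>CS. c \<noteq> []"
    and x_notin: "\<forall>p\<in>chain_positions CS. x \<notin> chain_entry p"
  shows "\<exists>p\<in>chain_positions CS. q = lift_position x (x \<in> chain_entry q) p
           \<and> chain_entry q - {x} = chain_entry p"
proof -
  obtain e k where q: "q = (e, k)" and "e \<in> insert_chains x CS" and "k < length e"
    using assms(1) by blast
  then consider c where "c \<in> CS" "e = extend_chain x c" "k < length c"
    | c where "c \<in> CS" "e = extend_chain x c" "k = length c"
    | c where "c \<in> CS" "2 \<le> length c" "e = shift_chain x c" "k < length c - 1"
    by (auto simp: insert_chains_def extend_chain_def shift_chain_def less_Suc_eq)
  then show ?thesis
  proof cases
    case 1
    with x_notin show ?thesis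
      by (intro bexI[of _ "(c, k)"]) (auto simp: q lift_position_def extend_chain_def nth_append)
  next
    case 2
    then have "last c = c ! (length c - 1)" and "length c - 1 < length c"
      using assms(2) by (auto simp: last_conv_nth)
    with x_notin 2 show ?thesis
      by (intro bexI[of _ "(c, length c - 1)"]) (auto simp: q lift_position_def extend_chain_def)
  next
    case 3
    with x_notin show ?thesis
      by (intro bexI[of _ "(c, k)"]) (auto simp: q lift_position_def shift_chain_def nth_butlast)
  qed
qed

lemma bij_betw_insert_chains:
  assumes bij: "bij_betw chain_entry (chain_positions CS) (Pow X)"
    and "\<forall>c\<in>CS. c \<noteq> []" and "x \<notin> X"
  shows "bij_betw chain_entry (chain_positions (insert_chains x CS)) (Pow (insert x X))"
proof -
  let ?I = "chain_positions CS" and ?J = "chain_positions (insert_chains x CS)"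
  have "\<forall>p\<in>?I. x \<notin> chain_entry p"
    using bij_betwE[OF bij] \<open>x \<notin> X\<close> by blast
  note preimage = lift_position_preimage[OF _ \<open>\<forall>c\<in>CS. c \<noteq> []\<close> this]
  have "inj_on chain_entry ?J"
  proof (rule inj_onI)
    fix q q'
    assume "q \<in> ?J" "q' \<in> ?J" and eq: "chain_entry q = chain_entry q'"
    define b where "b = (x \<in> chain_entry q)"
    obtain p where "p \<in> ?I" and q: "q = lift_position x b p" and p: "chain_entry q - {x} = chain_entry p"
      using preimage[OF \<open>q \<in> ?J\<close>] unfolding b_def by blast
    obtain p' where "p' \<in> ?I" and q': "q' = lift_position x b p'" and p': "chain_entry q - {x} = chain_entry p'"
      using preimage[OF \<open>q' \<in> ?J\<close>] unfolding b_def eq by blast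
    have "chain_entry p = chain_entry p'"
      using p p' by simp
    with bij_betw_imp_inj_on[OF bij] have "p = p'"
      using \<open>p \<in> ?I\<close> \<open>p' \<in> ?I\<close> by (rule inj_onD)
    then show "q = q'"
      unfolding q q' by simp
  qed
  moreover have "chain_entry ` ?J \<subseteq> Pow (insert x X)"
  proof
    fix A
    assume "A \<in> chain_entry ` ?J"
    then obtain q where "q \<in> ?J" and "A = chain_entry q"
      by blast
    then obtain p where "p \<in> ?I" and "A - {x} = chain_entry p"
      using preimage[OF \<open>q \<in> ?J\<close>] by blast
    then show "A \<in> Pow (insert x X)"
      using bij_betwE[OF bij] by blast
  qed
  moreover have "Pow (insert x X) \<subseteq> chain_entry ` ?J"
  proof
    fix A
    assume "A \<in> Pow (insert x X)"
    then have "A - {x} \<in> chain_entry ` ?I"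
      unfolding bij_betw_imp_surj_on[OF bij] by blast
    then obtain p where "chain_entry p = A - {x}" and "p \<in> ?I"
      by (rule imageE) simp
    then have "chain_entry (lift_position x (x \<in> A) p) = A" and "lift_position x (x \<in> A) p \<in> ?J"
      using lift_position[of p CS x "x \<in> A"] by (simp_all add: insert_absorb)
    then show "A \<in> chain_entry ` ?J"
      by (rule image_eqI[OF sym])
  qed
  ultimately show ?thesis
    unfolding bij_betw_def by blast
qed

lemma symmetric_chain_insert_chains:
  assumes "c \<in> insert_chains x CS" and chains: "\<forall>c\<in>CS. symmetric_chain X c"
    and "finite X" and "x \<notin> X"
  shows "symmetric_chain (insert x X) c"
  using assms(1) unfolding insert_chains_def
proof
  assume "c \<in> extend_chain x ` CS"
  then obtain c0 where "c0 \<in> CS" and "c = extend_chain x c0"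
    by blast
  then show ?thesis
    using symmetric_chain_extend_chain[OF bspec[OF chains] \<open>finite X\<close> \<open>x \<notin> X\<close>] by simp
next
  assume "c \<in> shift_chain x ` {c \<in> CS. 2 \<le> length c}"
  then obtain c0 where "c0 \<in> CS" and "2 \<le> length c0" and "c = shift_chain x c0"
    by blast
  then show ?thesis
    using symmetric_chain_shift_chain[OF bspec[OF chains] \<open>finite X\<close> \<open>x \<notin> X\<close>] by simp
qed

lemma symmetric_chain_decomposition_insert:
  assumes "symmetric_chain_decomposition X CS" and "finite X" and "x \<notin> X"
  shows "symmetric_chain_decomposition (insert x X) (insert_chains x CS)"
proof -
  have "finite CS" and chains: "\<forall>c\<in>CS. symmetric_chain X c"
    and bij: "bij_betw chain_entry (chain_positions CS) (Pow X)"
    using assms(1) unfolding symmetric_chain_decomposition_def by blast+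
  have "\<forall>c\<in>CS. c \<noteq> []"
    using chains unfolding symmetric_chain_def by blast
  moreover have "finite (insert_chains x CS)"
    using \<open>finite CS\<close> by (simp add: insert_chains_def)
  ultimately show ?thesis
    unfolding symmetric_chain_decomposition_def
    using bij_betw_insert_chains[OF bij _ \<open>x \<notin> X\<close>]
      symmetric_chain_insert_chains[OF _ chains \<open>finite X\<close> \<open>x \<notin> X\<close>] by blast
qed

lemma symmetric_chain_decomposition_exists:
  assumes "finite X"
  shows "\<exists>CS. symmetric_chain_decomposition X CS"
  using assms
proof (induction X rule: finite_induct)
  case empty
  have sigma: "chain_positions {[{}]} = {([{}], 0)}"
    by auto
  have "symmetric_chain_decomposition {} {[{}]}"
    unfolding symmetric_chain_decomposition_def symmetric_chain_def sigma by (simp add: bij_betw_def)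
  then show ?case
    by blast
next
  case (insert x X)
  then obtain CS where "symmetric_chain_decomposition X CS"
    by blast
  from symmetric_chain_decomposition_insert[OF this insert.hyps] show ?case
    by (rule exI)
qed

lemma symmetric_chain_decomposition_inv_into:
  assumes "symmetric_chain_decomposition X CS" and "S \<subseteq> X"
  shows "inv_into (chain_positions CS) chain_entry S \<in> chain_positions CS"
    and "chain_entry (inv_into (chain_positions CS) chain_entry S) = S"
proof -
  have "S \<in> chain_entry ` chain_positions CS"
    using assms unfolding symmetric_chain_decomposition_def bij_betw_def by blast
  then show "inv_into (chain_positions CS) chain_entry S \<in> chain_positions CS"
    and "chain_entry (inv_into (chain_positions CS) chain_entry S) = S"
    by (rule inv_into_into, rule f_inv_into_f)
qed

lemma sum_length_symmetric_chain_decomposition: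
  assumes "symmetric_chain_decomposition X CS" and "finite X"
  shows "(\<Sum>c\<in>CS. length c) = 2 ^ card X"
proof -
  have "finite CS" and "bij_betw chain_entry (chain_positions CS) (Pow X)"
    using assms(1) unfolding symmetric_chain_decomposition_def by blast+
  then have "card (chain_positions CS) = 2 ^ card X"
    using bij_betw_same_card card_Pow \<open>finite X\<close> by metis
  then show ?thesis
    using \<open>finite CS\<close> by simp
qed

lemma card_symmetric_chain_decomposition_le:
  assumes scd: "symmetric_chain_decomposition X CS" and "finite X"
  shows "card CS \<le> card X choose (card X div 2)"
proof -
  let ?m = "card X div 2"
  \<comment> \<open>every symmetric chain meets the middle rank, at this position\<close>
  define mid where "mid c = ?m - card (c ! 0)" for c :: "'a set list"
  have inj: "inj_on chain_entry (chain_positions CS)"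
    using scd unfolding symmetric_chain_decomposition_def bij_betw_def by blast
  have mid: "mid c < length c \<and> c ! mid c \<subseteq> X \<and> card (c ! mid c) = ?m" if "c \<in> CS" for c
  proof -
    have "symmetric_chain X c"
      using scd that unfolding symmetric_chain_decomposition_def by blast
    then have "c \<noteq> []" and sub: "\<And>i. i < length c \<Longrightarrow> c ! i \<subseteq> X"
      and card: "\<And>i. i < length c \<Longrightarrow> card (c ! i) = card (c ! 0) + i"
      and sym: "2 * card (c ! 0) + length c = card X + 1"
      unfolding symmetric_chain_def by blast+
    then have "1 \<le> length c"
      by (cases c) auto
    then have "mid c < length c" and "card (c ! 0) \<le> ?m"
      unfolding mid_def using sym by linarith+
    then show ?thesis
      using sub[of "mid c"] card[of "mid c"] unfolding mid_def by simp
  qed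
  have "inj_on (\<lambda>c. c ! mid c) CS"
  proof (rule inj_onI)
    fix c d
    assume "c \<in> CS" "d \<in> CS" and "c ! mid c = d ! mid d"
    then have "chain_entry (c, mid c) = chain_entry (d, mid d)"
      and "(c, mid c) \<in> chain_positions CS" and "(d, mid d) \<in> chain_positions CS"
      using mid by auto
    then have "(c, mid c) = (d, mid d)"
      by (rule inj_onD[OF inj])
    then show "c = d"
      by simp
  qed
  moreover have "(\<lambda>c. c ! mid c) ` CS \<subseteq> {A. A \<subseteq> X \<and> card A = ?m}"
    using mid by auto
  moreover have "finite {A. A \<subseteq> X \<and> card A = ?m}"
    using \<open>finite X\<close> by simp
  ultimately have "card CS \<le> card {A. A \<subseteq> X \<and> card A = ?m}"
    by (rule card_inj_on_le)
  also have "\<dots> = card X choose ?m"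
    using n_subsets[OF \<open>finite X\<close>] by simp
  finally show ?thesis .
qed

lemma forbidden_pair_chain_union:
  fixes L H :: "nat set"
  assumes c: "symmetric_chain L c" and d: "symmetric_chain H d" and below: "\<forall>a\<in>L. \<forall>b\<in>H. a < b"
    and "i' < i" "i < length c" and "j < j'" "j' < length d" and "j' - j = 2 * (i - i')"
  shows "forbidden_pair (c ! i \<union> d ! j) (c ! i' \<union> d ! j')"
proof -
  have c_sub: "\<And>k. k < length c \<Longrightarrow> c ! k \<subseteq> L"
    and c_mono: "\<And>k l. k \<le> l \<Longrightarrow> l < length c \<Longrightarrow> c ! k \<subseteq> c ! l"
    and c_card: "\<And>k. k < length c \<Longrightarrow> card (c ! k) = card (c ! 0) + k"
    using c unfolding symmetric_chain_def by blast+
  have d_sub: "\<And>k. k < length d \<Longrightarrow> d ! k \<subseteq> H"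
    and d_mono: "\<And>k l. k \<le> l \<Longrightarrow> l < length d \<Longrightarrow> d ! k \<subseteq> d ! l"
    and d_card: "\<And>k. k < length d \<Longrightarrow> card (d ! k) = card (d ! 0) + k"
    using d unfolding symmetric_chain_def by blast+
  have "c ! i' \<subseteq> c ! i" and "d ! j \<subseteq> d ! j'"
    using c_mono d_mono assms by simp_all
  moreover have "c ! i \<subseteq> L" "c ! i' \<subseteq> L" "d ! j \<subseteq> H" "d ! j' \<subseteq> H"
    using c_sub d_sub assms by simp_all
  moreover have "L \<inter> H = {}"
    using below by fastforce
  ultimately have diff: "(c ! i \<union> d ! j) - (c ! i' \<union> d ! j') = c ! i - c ! i'"
    "(c ! i' \<union> d ! j') - (c ! i \<union> d ! j) = d ! j' - d ! j"
    by blast+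
  have card_diff_c: "card (c ! i - c ! i') = i - i'"
    using card_Diff_subset[of "c ! i'" "c ! i"] c_card[of i] c_card[of i'] \<open>c ! i' \<subseteq> c ! i\<close> assms
    by (simp add: card_ge_0_finite finite_subset)
  moreover have "card (d ! j' - d ! j) = j' - j"
    using card_Diff_subset[of "d ! j" "d ! j'"] d_card[of j] d_card[of j'] \<open>d ! j \<subseteq> d ! j'\<close> assms
    by (simp add: card_ge_0_finite finite_subset)
  moreover have "c ! i \<union> d ! j \<noteq> c ! i' \<union> d ! j'"
  proof
    assume "c ! i \<union> d ! j = c ! i' \<union> d ! j'"
    then have "c ! i - c ! i' = {}"
      using diff(1) by simp
    then have "i - i' = 0"
      using card_diff_c by (metis card.empty)
    with \<open>i' < i\<close> show False
      by simp
  qed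
  ultimately show ?thesis
    unfolding forbidden_pair_def diff
    using \<open>c ! i \<subseteq> L\<close> \<open>d ! j' \<subseteq> H\<close> below \<open>j' - j = 2 * (i - i')\<close> by auto
qed

lemma forbidden_pair_free_chain_union_eq:
  fixes L H :: "nat set"
  assumes c: "symmetric_chain L c" and d: "symmetric_chain H d" and below: "\<forall>a\<in>L. \<forall>b\<in>H. a < b"
    and "i < length c" "i' < length c" "j < length d" "j' < length d" and ij: "2 * i + j = 2 * i' + j'"
    and "\<not> forbidden_pair (c ! i \<union> d ! j) (c ! i' \<union> d ! j')"
    and "\<not> forbidden_pair (c ! i' \<union> d ! j') (c ! i \<union> d ! j)"
  shows "c ! i \<union> d ! j = c ! i' \<union> d ! j'"
proof -
  consider "i = i'" | "i' < i" | "i < i'"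
    by linarith
  then show ?thesis
  proof cases
    case 1
    then show ?thesis
      using ij by simp
  next
    case 2
    then have "j < j'" and "j' - j = 2 * (i - i')"
      using ij by linarith+
    then have "forbidden_pair (c ! i \<union> d ! j) (c ! i' \<union> d ! j')"
      using forbidden_pair_chain_union[OF c d below 2 \<open>i < length c\<close>] \<open>j' < length d\<close> by blast
    with assms show ?thesis
      by blast
  next
    case 3
    then have "j' < j" and "j - j' = 2 * (i' - i)"
      using ij by linarith+
    then have "forbidden_pair (c ! i' \<union> d ! j') (c ! i \<union> d ! j)"
      using forbidden_pair_chain_union[OF c d below 3 \<open>i' < length c\<close>] \<open>j < length d\<close> by blast
    with assms show ?thesis
      by blast
  qed
qed

lemma card_forbidden_pair_free_le:
  fixes L H :: "nat set" and F :: "nat set set"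
  assumes "finite L" and "finite H" and below: "\<forall>a\<in>L. \<forall>b\<in>H. a < b"
    and F: "F \<subseteq> Pow (L \<union> H)" and free: "\<forall>A\<in>F. \<forall>B\<in>F. \<not> forbidden_pair A B"
  shows "card F \<le> 2 * (card H choose (card H div 2)) * 2 ^ card L
                  + (card L choose (card L div 2)) * 2 ^ card H"
proof -
  obtain CL where CL: "symmetric_chain_decomposition L CL"
    using symmetric_chain_decomposition_exists[OF \<open>finite L\<close>] by blast
  obtain CH where CH: "symmetric_chain_decomposition H CH"
    using symmetric_chain_decomposition_exists[OF \<open>finite H\<close>] by blast
  have "finite CL" "finite CH" and chain_L: "\<And>c. c \<in> CL \<Longrightarrow> symmetric_chain L c"
    and chain_H: "\<And>d. d \<in> CH \<Longrightarrow> symmetric_chain H d"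
    using CL CH unfolding symmetric_chain_decomposition_def by simp_all
  define g where "g A = (case (inv_into (chain_positions CL) chain_entry (A \<inter> L),
    inv_into (chain_positions CH) chain_entry (A \<inter> H)) of ((c, i), (d, j)) \<Rightarrow> ((c, d), 2 * i + j))"
    for A
  define T where "T = (SIGMA p:CL \<times> CH. {..<2 * length (fst p) + length (snd p)})"
  have position: "\<exists>c i d j. c \<in> CL \<and> i < length c \<and> d \<in> CH \<and> j < length d
      \<and> A = c ! i \<union> d ! j \<and> g A = ((c, d), 2 * i + j)" if "A \<in> F" for A
  proof -
    obtain c i d j where "inv_into (chain_positions CL) chain_entry (A \<inter> L) = (c, i)"
      and "inv_into (chain_positions CH) chain_entry (A \<inter> H) = (d, j)"
      by (meson prod.exhaust)
    moreover have "A = (A \<inter> L) \<union> (A \<inter> H)"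
      using F that by blast
    ultimately show ?thesis
      using symmetric_chain_decomposition_inv_into[OF CL, of "A \<inter> L"]
        symmetric_chain_decomposition_inv_into[OF CH, of "A \<inter> H"]
      unfolding g_def by (intro exI) auto
  qed
  have "g ` F \<subseteq> T"
    using position unfolding T_def by fastforce
  moreover have "inj_on g F"
  proof (rule inj_onI)
    fix A B
    assume "A \<in> F" "B \<in> F" and "g A = g B"
    obtain c i d j where "c \<in> CL" "i < length c" "d \<in> CH" "j < length d"
      and A: "A = c ! i \<union> d ! j" and gA: "g A = ((c, d), 2 * i + j)"
      using position[OF \<open>A \<in> F\<close>] by blast
    obtain c' i' d' j' where "c' \<in> CL" "i' < length c'" "d' \<in> CH" "j' < length d'"
      and B: "B = c' ! i' \<union> d' ! j'" and gB: "g B = ((c', d'), 2 * i' + j')"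
      using position[OF \<open>B \<in> F\<close>] by blast
    have "c' = c" "d' = d" "2 * i + j = 2 * i' + j'"
      using \<open>g A = g B\<close> gA gB by simp_all
    then show "A = B"
      unfolding A B using forbidden_pair_free_chain_union_eq[OF chain_L chain_H below]
        \<open>c \<in> CL\<close> \<open>d \<in> CH\<close> \<open>i < length c\<close> \<open>i' < length c'\<close> \<open>j < length d\<close> \<open>j' < length d'\<close>
        free \<open>A \<in> F\<close> \<open>B \<in> F\<close> A B by simp
  qed
  moreover have "finite T"
    unfolding T_def using \<open>finite CL\<close> \<open>finite CH\<close> by auto
  ultimately have "card F \<le> card T"
    by (intro card_inj_on_le)
  also have "card T = (\<Sum>c\<in>CL. \<Sum>d\<in>CH. 2 * length c + length d)"
    unfolding T_def using \<open>finite CL\<close> \<open>finite CH\<close> by (simp add: sum.cartesian_product case_prod_beta)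
  also have "\<dots> = 2 * card CH * (\<Sum>c\<in>CL. length c) + card CL * (\<Sum>d\<in>CH. length d)"
    by (simp add: sum.distrib sum_distrib_left sum_distrib_right mult_ac)
  also have "\<dots> \<le> 2 * (card H choose (card H div 2)) * 2 ^ card L + (card L choose (card L div 2)) * 2 ^ card H"
    using card_symmetric_chain_decomposition_le[OF CL \<open>finite L\<close>] card_symmetric_chain_decomposition_le[OF CH \<open>finite H\<close>]
      sum_length_symmetric_chain_decomposition[OF CL \<open>finite L\<close>] sum_length_symmetric_chain_decomposition[OF CH \<open>finite H\<close>]
    by (intro add_mono mult_le_mono) auto
  finally show ?thesis .
qed

lemma card_forbidden_pair_free_atLeastAtMost_le:
  fixes F :: "nat set set"
  assumes "F \<subseteq> Pow {1..n}" and "\<forall>A\<in>F. \<forall>B\<in>F. \<not> forbidden_pair A B"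
  shows "real (card F) \<le> 3 * 2 ^ n / sqrt (real (n div 2) + 1)"
proof -
  define h where "h = n div 2"
  have "h \<le> n - h"
    unfolding h_def by simp
  have "{1..n} = {1..h} \<union> {h + 1..n}" and "\<forall>a\<in>{1..h}. \<forall>b\<in>{h + 1..n}. a < b"
    unfolding h_def by auto
  then have "card F \<le> 2 * ((n - h) choose ((n - h) div 2)) * 2 ^ h + (h choose (h div 2)) * 2 ^ (n - h)"
    using card_forbidden_pair_free_le[of "{1..h}" "{h + 1..n}" F] assms by simp
  then have "real (card F) \<le> 2 * real ((n - h) choose ((n - h) div 2)) * 2 ^ h + real (h choose (h div 2)) * 2 ^ (n - h)"
    by (metis (mono_tags) of_nat_add of_nat_le_iff of_nat_mult of_nat_numeral of_nat_power)
  also have "\<dots> \<le> 2 * (2 ^ (n - h) / sqrt (real h + 1)) * 2 ^ h + 2 ^ h / sqrt (real h + 1) * 2 ^ (n - h)"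
  proof -
    have "2 ^ (n - h) / sqrt (real (n - h) + 1) \<le> 2 ^ (n - h) / sqrt (real h + 1)"
      using \<open>h \<le> n - h\<close> by (intro divide_left_mono) auto
    then show ?thesis
      using central_binomial_le[of "n - h"] central_binomial_le[of h] by (intro add_mono mult_right_mono) auto
  qed
  also have "\<dots> = 3 * 2 ^ n / sqrt (real h + 1)"
    using \<open>h \<le> n - h\<close> by (simp add: field_simps flip: power_add)
  finally show ?thesis
    unfolding h_def .
qed

lemma three_div_sqrt_half_le: "1 \<le> n \<Longrightarrow> 3 / sqrt (real (n div 2) + 1) \<le> 5 / sqrt (real n)"
proof -
  assume "1 \<le> n"
  have "real n \<le> 2 * real (n div 2) + 1"
    by linarith
  then have "(3 * sqrt (real n))^2 \<le> (5 * sqrt (real (n div 2) + 1))^2"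
    by (simp add: power_mult_distrib)
  then have "3 * sqrt (real n) \<le> 5 * sqrt (real (n div 2) + 1)"
    by (rule power2_le_imp_le) simp
  moreover have "0 < sqrt (real n)"
    using \<open>1 \<le> n\<close> by simp
  ultimately show ?thesis
    by (simp add: field_simps)
qed

theorem theorem3:
  shows "\<exists>C::real. C > 0 \<and> (\<forall>(n::nat) (\<A>::nat set set). n \<ge> 1 \<longrightarrow>
     \<A> \<subseteq> Pow {1..n} \<longrightarrow>
     \<not> (\<exists>A\<in>\<A>. \<exists>B\<in>\<A>. forbidden_pair A B) \<longrightarrow>
     real (card \<A>) \<le> C * exp (120 * sqrt (ln (real n))) * 2 ^ n / sqrt (real n))"
proof (intro exI[of _ 5] conjI allI impI)
  fix n :: nat and F :: "nat set set"
  assume "n \<ge> 1" and "F \<subseteq> Pow {1..n}" and "\<not> (\<exists>A\<in>F. \<exists>B\<in>F. forbidden_pair A B)"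
  then have "real (card F) \<le> 2 ^ n * (3 / sqrt (real (n div 2) + 1))"
    using card_forbidden_pair_free_atLeastAtMost_le[of F n] by (simp add: mult.commute)
  also have "\<dots> \<le> 2 ^ n * (5 / sqrt (real n))"
    using three_div_sqrt_half_le[OF \<open>n \<ge> 1\<close>] by (intro mult_left_mono) simp_all
  also have "\<dots> \<le> 2 ^ n * (5 / sqrt (real n)) * exp (120 * sqrt (ln (real n)))"
  proof -
    have "1 \<le> exp (120 * sqrt (ln (real n)))"
      using \<open>n \<ge> 1\<close> by simp
    then have "2 ^ n * (5 / sqrt (real n)) * 1 \<le> 2 ^ n * (5 / sqrt (real n)) * exp (120 * sqrt (ln (real n)))"
      by (intro mult_left_mono) simp_all
    then show ?thesis
      by simp
  qed
  finally show "real (card F) \<le> 5 * exp (120 * sqrt (ln (real n))) * 2 ^ n / sqrt (real n)"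
    by (simp add: mult_ac)
qed simp

end
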